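(* Let $A$, $Q$, $H\subseteq A^Q$ be non-empty finite sets, $n\ge3$, and $\mathcal F$ a clone with carrier $A$ satisfying $\Delta^s_n$, and suppose $H\in\mathrm{Inv}_Q\mathcal F$. Let $p,q\in Q$, $a\in H(p)$, $|H(q)|\ge n$, and suppose $H$ weakly separates $p$ from $q$ at the point $a$. Then $H$ strongly separates $p$ from $q$ at the point $a$.
   Context: $\mathcal O(A)=\bigcup_{n<\omega}A^{A^n}$; $\mathcal F_{[n]}=\mathcal F\cap A^{A^n}$; $\mathrm{ran}\,\mathbf x$ is the set of entries of $\mathbf x\in A^n$; $A^n_k=\{\mathbf x\in A^n:|\mathrm{ran}\,\mathbf x|=k\}$, $A^n_{<n}=\bigcup_{k<n}A^n_k$. A clone with carrier $A$ is a subset of $\mathcal O(A)$ containing all projections and closed under composition. For $f\in\mathcal O(A)_{[m]}$, $h_i\in A^Q$, $f(h_0,\dots,h_{m-1})$ is $q\mapsto f(h_0(q)\dots h_{m-1}(q))$; $\mathrm{Inv}_Q\mathcal F$ is the set of $H\subseteq A^Q$ closed under such compositions with $f\in\mathcal F$. $H(q)=\{h(q):h\in H\}$. $\mathcal F$ satisfies $\Delta^s_n$ if there is $i<n$ such that for every $\mathbf a\in A^n_n$ and $a\in\mathrm{ran}\,\mathbf a$ there is $s\in\mathcal F_{[n]}$ with $s(\mathbf a)=a$ and $s(\mathbf x)=x_i$ for all $\mathbf x\in A^n_{<n}$. $H$ weakly separates $p$ from $q$ at $a\in H(p)$ if there are $h_1,h_2\in H$ with $h_1(p)=h_2(p)=a$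 and $h_1(q)\ne h_2(q)$; $H$ strongly separates $p$ from $q$ at $a$ if for every $b\in H(q)$ there is $h\in H$ with $h(p)=a$, $h(q)=b$. *)

theory Defs
  imports "HOL-Library.FuncSet"
begin

text \<open>An n-ary operation on A is represented as a function on lists, which maps
  every list of length n over A into A and is undefined elsewhere (extensional).
  A set of operations (e.g. a clone) is a set of pairs (arity, operation).\<close>

definition tuples :: "'a set \<Rightarrow> nat \<Rightarrow> 'a list set" where
  "tuples A n = {xs. length xs = n \<and> set xs \<subseteq> A}"

definition ops :: "'a set \<Rightarrow> nat \<Rightarrow> ('a list \<Rightarrow> 'a) set" where
  "ops A n = {f. (\<forall>xs \<in> tuples A n. f xs \<in> A) \<and> (\<forall>xs. xs \<notin> tuples A n \<longrightarrow> f xs = undefined)}"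

definition proj_op :: "'a set \<Rightarrow> nat \<Rightarrow> nat \<Rightarrow> ('a list \<Rightarrow> 'a)" where
  "proj_op A n i = (\<lambda>xs. if xs \<in> tuples A n then xs ! i else undefined)"

definition comp_op :: "'a set \<Rightarrow> nat \<Rightarrow> nat \<Rightarrow> ('a list \<Rightarrow> 'a) \<Rightarrow> (nat \<Rightarrow> 'a list \<Rightarrow> 'a) \<Rightarrow> ('a list \<Rightarrow> 'a)" where
  "comp_op A n m f g = (\<lambda>xs. if xs \<in> tuples A n then f (map (\<lambda>i. g i xs) [0..<m]) else undefined)"

definition clone :: "'a set \<Rightarrow> (nat \<times> ('a list \<Rightarrow> 'a)) set \<Rightarrow> bool" where
  "clone A F \<longleftrightarrow>
     (\<forall>(n, f) \<in> F. f \<in> ops A n) \<and>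
     (\<forall>n i. i < n \<longrightarrow> (n, proj_op A n i) \<in> F) \<and>
     (\<forall>m n f g. (m, f) \<in> F \<and> (\<forall>i < m. (n, g i) \<in> F) \<longrightarrow> (n, comp_op A n m f g) \<in> F)"

definition Delta_s :: "'a set \<Rightarrow> (nat \<times> ('a list \<Rightarrow> 'a)) set \<Rightarrow> nat \<Rightarrow> bool" where
  "Delta_s A F n \<longleftrightarrow> (\<exists>i < n. \<forall>as \<in> tuples A n. card (set as) = n \<longrightarrow>
     (\<forall>a \<in> set as. \<exists>s. (n, s) \<in> F \<and> s as = a \<and>
        (\<forall>xs \<in> tuples A n. card (set xs) < n \<longrightarrow> s xs = xs ! i)))"

definition Inv :: "'a set \<Rightarrow> 'q set \<Rightarrow> (nat \<times> ('a list \<Rightarrow> 'a)) set \<Rightarrow> ('q \<Rightarrow> 'a) set set" where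
  "Inv A Q F = {H. H \<subseteq> Q \<rightarrow>\<^sub>E A \<and>
     (\<forall>m f h. (m, f) \<in> F \<and> (\<forall>i < m. h i \<in> H) \<longrightarrow>
        (\<lambda>q\<in>Q. f (map (\<lambda>i. h i q) [0..<m])) \<in> H)}"

definition weakly_separates :: "('q \<Rightarrow> 'a) set \<Rightarrow> 'q \<Rightarrow> 'q \<Rightarrow> 'a \<Rightarrow> bool" where
  "weakly_separates H p q a \<longleftrightarrow>
     (\<exists>h1 \<in> H. \<exists>h2 \<in> H. h1 p = a \<and> h2 p = a \<and> h1 q \<noteq> h2 q)"

definition strongly_separates :: "('q \<Rightarrow> 'a) set \<Rightarrow> 'q \<Rightarrow> 'q \<Rightarrow> 'a \<Rightarrow> bool" where
  "strongly_separates H p q a \<longleftrightarrow>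
     (\<forall>b \<in> (\<lambda>h. h q) ` H. \<exists>h \<in> H. h p = a \<and> h q = b)"

end

theory Submission
  imports Defs
begin

text \<open>Pick members h_0, ..., h_(n-1) of H whose values at q are pairwise distinct,
  such that h_i and h_j are the two functions weakly separating p from q at a and h_k takes
  the prescribed value b at q; this is possible because |H(q)| \<ge> n. The operation s of
  Delta^s_n sending the tuple of values at q to b acts as the i-th projection on tuples with a
  repetition, in particular on the tuple of values at p, whose entries i and j are both a.
  Applying s coordinatewise to the h_l gives a member of H mapping p to a and q to b.\<close>

definition Delta_s_at :: "'a set \<Rightarrow> (nat \<times> ('a list \<Rightarrow> 'a)) set \<Rightarrow> nat \<Rightarrow> nat \<Rightarrow> bool" where
  "Delta_s_at A F n i \<longleftrightarrow> i < n \<and> (\<forall>as \<in> tuples A n. card (set as) = n \<longrightarrow>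
     (\<forall>a \<in> set as. \<exists>s. (n, s) \<in> F \<and> s as = a \<and>
        (\<forall>xs \<in> tuples A n. card (set xs) < n \<longrightarrow> s xs = xs ! i)))"

lemma Delta_s_iff_Delta_s_at: "Delta_s A F n \<longleftrightarrow> (\<exists>i. Delta_s_at A F n i)"
  unfolding Delta_s_def Delta_s_at_def by blast

lemma Delta_s_at_index_less: "Delta_s_at A F n i \<Longrightarrow> i < n"
  unfolding Delta_s_at_def by (rule conjunct1)

lemma Inv_closed:
  assumes "H \<in> Inv A Q F" "(m, f) \<in> F" "\<And>i. i < m \<Longrightarrow> h i \<in> H"
  shows "(\<lambda>x\<in>Q. f (map (\<lambda>i. h i x) [0..<m])) \<in> H"
  using assms unfolding Inv_def by blast

lemma Inv_subset_PiE: "H \<in> Inv A Q F \<Longrightarrow> H \<subseteq> Q \<rightarrow>\<^sub>E A"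
  unfolding Inv_def by blast

lemma inj_on_extend:
  assumes "finite N" "finite C" "I \<subseteq> N" "card N \<le> card C"
    and "inj_on v0 I" "v0 ` I \<subseteq> C"
  obtains v where "inj_on v N" "v ` N \<subseteq> C" "\<And>x. x \<in> I \<Longrightarrow> v x = v0 x"
proof -
  have "card (N - I) = card N - card I"
    using assms(1,3) by (simp add: card_Diff_subset finite_subset)
  also have "\<dots> \<le> card C - card (v0 ` I)"
    using assms(4,5) by (simp add: card_image)
  also have "\<dots> = card (C - v0 ` I)"
    using assms(2,6) by (simp add: card_Diff_subset finite_subset)
  finally obtain g where g: "g ` (N - I) \<subseteq> C - v0 ` I" "inj_on g (N - I)"
    using card_le_inj[of "N - I" "C - v0 ` I"] assms(1,2) by blast
  let ?v = "\<lambda>x. if x \<in> I then v0 x else g x"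
  have "inj_on ?v N"
  proof (rule inj_onI)
    fix x y assume "x \<in> N" "y \<in> N" and eq: "?v x = ?v y"
    have fresh: "g z \<notin> v0 ` I" if "z \<in> N - I" for z
      using g(1) that by blast
    show "x = y"
    proof (cases "x \<in> I"; cases "y \<in> I")
      assume "x \<in> I" "y \<in> I"
      then show ?thesis using eq assms(5) by (simp add: inj_on_eq_iff)
    next
      assume "x \<notin> I" "y \<notin> I"
      then show ?thesis using eq g(2) \<open>x \<in> N\<close> \<open>y \<in> N\<close> by (simp add: inj_on_eq_iff)
    next
      assume "x \<in> I" "y \<notin> I"
      then show ?thesis using eq fresh[of y] \<open>y \<in> N\<close> by (metis DiffI imageI)
    next
      assume "x \<notin> I" "y \<in> I"
      then show ?thesis using eq fresh[of x] \<open>x \<in> N\<close> by (metis DiffI imageI)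
    qed
  qed
  moreover have "?v ` N \<subseteq> C"
    using g assms(6) by auto
  ultimately show thesis
    using that by simp
qed

lemma three_distinct_indices:
  assumes "3 \<le> n" "i < (n::nat)"
  obtains j k where "j < n" "k < n" "distinct [i, j, k]"
proof -
  consider "i = 0" | "i = 1" | "i \<ge> 2" by linarith
  then show thesis
    by cases (use assms that[of 1 2] that[of 0 2] that[of 0 1] in auto)
qed

lemma Inv_Delta_s_at_interpolation:
  assumes "H \<in> Inv A Q F" "Delta_s_at A F n i" "p \<in> Q" "q \<in> Q"
    and "\<And>l. l < n \<Longrightarrow> g l \<in> H"
    and "distinct (map (\<lambda>l. g l q) [0..<n])"
    and "\<not> distinct (map (\<lambda>l. g l p) [0..<n])"
    and "k < n"
  shows "\<exists>h \<in> H. h p = g i p \<and> h q = g k q"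
proof -
  define tuple where "tuple x = map (\<lambda>l. g l x) [0..<n]" for x
  have tuple_in: "tuple x \<in> tuples A n" if "x \<in> Q" for x
    using assms(5) Inv_subset_PiE[OF assms(1)] that by (fastforce simp: tuple_def tuples_def)
  have "card (set (tuple q)) = n"
    using distinct_card[OF assms(6)] by (simp add: tuple_def)
  moreover have "g k q \<in> set (tuple q)"
    using assms(8) by (simp add: tuple_def)
  ultimately obtain s where s: "(n, s) \<in> F" "s (tuple q) = g k q"
    and s_proj: "\<And>xs. xs \<in> tuples A n \<Longrightarrow> card (set xs) < n \<Longrightarrow> s xs = xs ! i"
    using assms(2) tuple_in[OF assms(4)] unfolding Delta_s_at_def by blast
  have "card (set (tuple p)) < n"
    using card_length[of "tuple p"] card_distinct[of "tuple p"] assms(7)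
    by (fastforce simp: tuple_def)
  then have "s (tuple p) = g i p"
    using s_proj tuple_in[OF assms(3)] Delta_s_at_index_less[OF assms(2)] by (simp add: tuple_def)
  moreover have "(\<lambda>x\<in>Q. s (tuple x)) \<in> H"
    using Inv_closed[OF assms(1) s(1) assms(5)] by (simp add: tuple_def)
  ultimately show ?thesis
    using s(2) assms(3,4) by (intro bexI[of _ "\<lambda>x\<in>Q. s (tuple x)"]) simp_all
qed

lemma obtain_family_distinct_at:
  fixes H :: "('q \<Rightarrow> 'a) set"
  assumes "finite H" "n \<le> card ((\<lambda>h. h q) ` H)"
    and "distinct [i, j, k]" "i < n" "j < n" "k < n"
    and "h1 \<in> H" "h2 \<in> H" "h1 q \<noteq> h2 q"
    and "b \<in> (\<lambda>h. h q) ` H" "b \<notin> {h1 q, h2 q}"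
  obtains g where "\<And>l. l < n \<Longrightarrow> g l \<in> H" "distinct (map (\<lambda>l. g l q) [0..<n])"
    "g i = h1" "g j = h2" "g k q = b"
proof -
  let ?Hq = "(\<lambda>h. h q) ` H"
  let ?v0 = "\<lambda>l. if l = i then h1 q else if l = j then h2 q else b"
  have v0_inj: "inj_on ?v0 {i, j, k}"
    using assms(3,9,11) by (auto simp: inj_on_def)
  have v0_range: "?v0 ` {i, j, k} \<subseteq> ?Hq"
    using assms(7,8,10) by auto
  have ijk_range: "{i, j, k} \<subseteq> {..<n}"
    using assms(4-6) by auto
  have card_le: "card {..<n} \<le> card ?Hq"
    using assms(2) by simp
  obtain v where v: "inj_on v {..<n}" "v ` {..<n} \<subseteq> ?Hq"
    and v_ijk: "\<And>l. l \<in> {i, j, k} \<Longrightarrow> v l = ?v0 l"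
    by (rule inj_on_extend[OF finite_lessThan finite_imageI[OF assms(1)]
          ijk_range card_le v0_inj v0_range]) (rule that; assumption)
  have v_i: "v i = h1 q" and v_j: "v j = h2 q" and v_k: "v k = b"
    using v_ijk[of i] v_ijk[of j] v_ijk[of k] assms(3) by auto
  have "\<forall>l. \<exists>h. l < n \<longrightarrow> h \<in> H \<and> h q = v l"
    using v(2) by (fastforce simp: image_subset_iff)
  then obtain g where g: "\<forall>l. l < n \<longrightarrow> g l \<in> H \<and> g l q = v l"
    by (rule choice[THEN exE])
  let ?g = "g(i := h1, j := h2)"
  have g'_q: "?g l q = v l" if "l < n" for l
    using g that v_i v_j by simp
  show thesis
  proof (rule that)
    show "?g l \<in> H" if "l < n" for l
      using g that assms(7,8) by simp
    have "inj_on (\<lambda>l. ?g l q) {..<n}"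
      by (rule inj_on_cong[THEN iffD2, OF _ v(1)]) (simp only: lessThan_iff g'_q)
    then show "distinct (map (\<lambda>l. ?g l q) [0..<n])"
      by (simp add: distinct_map atLeast0LessThan)
    show "?g i = h1" "?g j = h2"
      using assms(3) by simp_all
    show "?g k q = b"
      using g'_q[OF assms(6)] v_k by (rule trans)
  qed
qed

theorem lemma4:
  fixes A :: "'a set" and Q :: "'q set" and H :: "('q \<Rightarrow> 'a) set"
    and F :: "(nat \<times> ('a list \<Rightarrow> 'a)) set" and n :: nat and p q :: 'q and a :: 'a
  assumes "finite A" "A \<noteq> {}" "finite Q" "Q \<noteq> {}" "finite H" "H \<noteq> {}"
    and "H \<subseteq> Q \<rightarrow>\<^sub>E A"
    and "n \<ge> 3"
    and "clone A F" and "Delta_s A F n"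
    and "H \<in> Inv A Q F"
    and "p \<in> Q" "q \<in> Q"
    and "a \<in> (\<lambda>h. h p) ` H"
    and "card ((\<lambda>h. h q) ` H) \<ge> n"
    and "weakly_separates H p q a"
  shows "strongly_separates H p q a"
  unfolding strongly_separates_def
proof
  fix b assume b: "b \<in> (\<lambda>h. h q) ` H"
  obtain h1 h2 where h12: "h1 \<in> H" "h2 \<in> H" "h1 p = a" "h2 p = a" "h1 q \<noteq> h2 q"
    using assms(16) unfolding weakly_separates_def by blast
  show "\<exists>h\<in>H. h p = a \<and> h q = b"
  proof (cases "b \<in> {h1 q, h2 q}")
    case True
    then show ?thesis using h12 by auto
  next
    case False
    obtain i where i: "Delta_s_at A F n i"
      using assms(10) Delta_s_iff_Delta_s_at by blast
    note i_less = Delta_s_at_index_less[OF i]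
    obtain j k where ijk: "j < n" "k < n" "distinct [i, j, k]"
      using three_distinct_indices[OF assms(8) i_less] by blast
    obtain g where g: "\<And>l. l < n \<Longrightarrow> g l \<in> H" "distinct (map (\<lambda>l. g l q) [0..<n])"
      and g_ijk: "g i = h1" "g j = h2" "g k q = b"
      by (rule obtain_family_distinct_at[OF assms(5,15) ijk(3) i_less ijk(1,2) h12(1,2,5) b False])
        (rule that; assumption)
    let ?tp = "map (\<lambda>l. g l p) [0..<n]"
    have "?tp ! i = ?tp ! j" "i \<noteq> j" "i < length ?tp" "j < length ?tp"
      using ijk i_less g_ijk h12(3,4) by auto
    then have tp_repeats: "\<not> distinct ?tp"
      using nth_eq_iff_index_eq by blast
    obtain h where "h \<in> H" "h p = g i p" "h q = g k q"
      using Inv_Delta_s_at_interpolation[OF assms(11) i assms(12,13) g tp_repeats ijk(2)] by blast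
    then show ?thesis
      using g_ijk h12(3) by auto
  qed
qed

end
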